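(* Let $(S,d)$ be a metric space and let $P\subset S$ be a subset with at least two points, equipped with the restriction of $d$. Then $\mathcal{E}^S_P$ maps $\operatorname{ext}_*(B^P_{\mathrm{BL}})$ into $\operatorname{ext}_*(B^S_{\mathrm{BL}})$.
   Context: For a metric space $T$, $\mathrm{BL}(T)$ is the space of bounded real-valued Lipschitz functions on $T$, $|f|_L=\sup_{x\neq y}|f(x)-f(y)|/d(x,y)$, $\|f\|_{\mathrm{BL}}=\|f\|_\infty+|f|_L$, $B^T_{\mathrm{BL}}=\{f\in\mathrm{BL}(T):\|f\|_{\mathrm{BL}}\le1\}$, and $\operatorname{ext}_*(B^T_{\mathrm{BL}})=\operatorname{ext}(B^T_{\mathrm{BL}})\setminus\{f\in B^T_{\mathrm{BL}}:|f|=\mathbf{1}\}$ (non-trivial extreme points). For $f\in\mathrm{BL}(P)$: $\mathcal{E}^{S,0}_P f(x)=\sup_{p\in P}[f(p)-|f|_L d(p,x)]$ for $x\in S$, and $\mathcal{E}^S_P f=\max(\mathcal{E}^{S,0}_P f,-\|f\|_\infty)$. *)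

theory Defs
  imports "HOL-Analysis.Analysis"
begin

text \<open>Functions on a subset T of a metric space are represented as total functions
  that vanish outside T (extensional convention), so equality of functions is
  equality on T.\<close>

definition lip_seminorm :: "'a::metric_space set \<Rightarrow> ('a \<Rightarrow> real) \<Rightarrow> real" where
  "lip_seminorm T f = Sup (insert 0 {\<bar>f x - f y\<bar> / dist x y | x y. x \<in> T \<and> y \<in> T \<and> x \<noteq> y})"

definition sup_norm :: "'a set \<Rightarrow> ('a \<Rightarrow> real) \<Rightarrow> real" where
  "sup_norm T f = Sup (insert 0 ((\<lambda>x. \<bar>f x\<bar>) ` T))"

definition BL :: "'a::metric_space set \<Rightarrow> ('a \<Rightarrow> real) set" where
  "BL T = {f. bounded (f ` T) \<and> (\<exists>C. lipschitz_on C T f) \<and> (\<forall>x. x \<notin> T \<longrightarrow> f x = 0)}"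

definition BL_norm :: "'a::metric_space set \<Rightarrow> ('a \<Rightarrow> real) \<Rightarrow> real" where
  "BL_norm T f = sup_norm T f + lip_seminorm T f"

definition BL_ball :: "'a::metric_space set \<Rightarrow> ('a \<Rightarrow> real) set" where
  "BL_ball T = {f \<in> BL T. BL_norm T f \<le> 1}"

definition ext_pts :: "('a \<Rightarrow> real) set \<Rightarrow> ('a \<Rightarrow> real) set" where
  "ext_pts A = {f \<in> A. \<not> (\<exists>g\<in>A. \<exists>h\<in>A. \<exists>t::real. 0 < t \<and> t < 1 \<and> g \<noteq> h \<and>
       f = (\<lambda>x. t * g x + (1 - t) * h x))}"

definition ext_star :: "'a::metric_space set \<Rightarrow> ('a \<Rightarrow> real) set" where
  "ext_star T = ext_pts (BL_ball T) - {f \<in> BL_ball T. \<forall>x\<in>T. \<bar>f x\<bar> = 1}"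

text \<open>The extension operators, with S the whole space (type UNIV).\<close>
definition ext_op0 :: "'a::metric_space set \<Rightarrow> ('a \<Rightarrow> real) \<Rightarrow> 'a \<Rightarrow> real" where
  "ext_op0 P f x = (SUP p\<in>P. f p - lip_seminorm P f * dist p x)"

definition ext_op :: "'a::metric_space set \<Rightarrow> ('a \<Rightarrow> real) \<Rightarrow> 'a \<Rightarrow> real" where
  "ext_op P f x = max (ext_op0 P f x) (- sup_norm P f)"

end

theory Submission
  imports Defs
begin

text \<open>An extreme point f of the unit ball of BL(P) has norm M + L = 1 (M its sup-norm,
  L its Lipschitz constant), since otherwise f is the midpoint of f + e and f - e for the
  slack e. The extension F is the least L-Lipschitz function bounded below by -M that
  extends f, and every extension of f in the unit ball of BL(S) is such a function,
  because it can exceed neither part of the norm of f. If F = t g + (1 - t) h, restricting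
  to P writes f as the same combination, so g and h extend f; then F \<le> g, F \<le> h and
  0 < t < 1 force g = h. Finally F is non-trivial because it extends f.\<close>

lemma lip_seminorm_quotients_le:
  fixes f :: "'a::metric_space \<Rightarrow> real"
  assumes "C-lipschitz_on T f"
    and "z \<in> insert 0 {\<bar>f x - f y\<bar> / dist x y | x y. x \<in> T \<and> y \<in> T \<and> x \<noteq> y}"
  shows "z \<le> C"
  using assms(2)
proof
  assume "z \<in> {\<bar>f x - f y\<bar> / dist x y | x y. x \<in> T \<and> y \<in> T \<and> x \<noteq> y}"
  then obtain x y where xy: "x \<in> T" "y \<in> T" "x \<noteq> y" and z: "z = \<bar>f x - f y\<bar> / dist x y"
    by blast
  have "\<bar>f x - f y\<bar> \<le> C * dist x y"
    using lipschitz_onD[OF assms(1) xy(1,2)] by (simp add: dist_real_def)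
  then show "z \<le> C" using xy(3) by (simp add: z divide_le_eq)
qed (use lipschitz_on_nonneg[OF assms(1)] in simp)

lemma lip_seminorm_le:
  fixes f :: "'a::metric_space \<Rightarrow> real"
  assumes "C-lipschitz_on T f"
  shows "lip_seminorm T f \<le> C"
  unfolding lip_seminorm_def by (rule cSup_least) (auto intro: lip_seminorm_quotients_le[OF assms])

lemma lip_seminorm_bound:
  fixes f :: "'a::metric_space \<Rightarrow> real"
  assumes "C-lipschitz_on T f" "x \<in> T" "y \<in> T"
  shows "\<bar>f x - f y\<bar> \<le> lip_seminorm T f * dist x y"
proof (cases "x = y")
  case False
  have bdd: "bdd_above (insert 0 {\<bar>f x - f y\<bar> / dist x y | x y. x \<in> T \<and> y \<in> T \<and> x \<noteq> y})"
    using lip_seminorm_quotients_le[OF assms(1)] by (rule bdd_aboveI)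
  have "\<bar>f x - f y\<bar> / dist x y \<le> lip_seminorm T f"
    unfolding lip_seminorm_def by (rule cSup_upper[OF _ bdd]) (use assms False in blast)
  then show ?thesis using False by (simp add: divide_le_eq)
qed simp

lemma lip_seminorm_nonneg:
  fixes f :: "'a::metric_space \<Rightarrow> real"
  assumes "C-lipschitz_on T f"
  shows "0 \<le> lip_seminorm T f"
  unfolding lip_seminorm_def
  by (rule cSup_upper[OF insertI1], rule bdd_aboveI, rule lip_seminorm_quotients_le[OF assms])

lemma lipschitz_on_lip_seminorm:
  fixes f :: "'a::metric_space \<Rightarrow> real"
  assumes "C-lipschitz_on T f"
  shows "(lip_seminorm T f)-lipschitz_on T f"
  using lip_seminorm_bound[OF assms] lip_seminorm_nonneg[OF assms]
  by (simp add: lipschitz_on_def dist_real_def)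

lemma bdd_above_sup_norm_values:
  fixes f :: "'a \<Rightarrow> real"
  assumes "bounded (f ` T)"
  shows "bdd_above (insert 0 ((\<lambda>x. \<bar>f x\<bar>) ` T))"
proof -
  obtain B where "\<forall>x\<in>T. \<bar>f x\<bar> \<le> B" using assms unfolding bounded_iff by auto
  then show ?thesis by (intro bdd_aboveI[where M = "max 0 B"]) auto
qed

lemma sup_norm_upper:
  fixes f :: "'a \<Rightarrow> real"
  assumes "bounded (f ` T)" "x \<in> T"
  shows "\<bar>f x\<bar> \<le> sup_norm T f"
  unfolding sup_norm_def
  by (rule cSup_upper[OF _ bdd_above_sup_norm_values[OF assms(1)]]) (use assms in blast)

lemma sup_norm_nonneg:
  fixes f :: "'a \<Rightarrow> real"
  assumes "bounded (f ` T)"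
  shows "0 \<le> sup_norm T f"
  unfolding sup_norm_def by (rule cSup_upper[OF _ bdd_above_sup_norm_values[OF assms]]) simp

lemma sup_norm_le:
  fixes f :: "'a \<Rightarrow> real"
  assumes "\<forall>x\<in>T. \<bar>f x\<bar> \<le> B" "0 \<le> B"
  shows "sup_norm T f \<le> B"
  unfolding sup_norm_def by (rule cSup_least) (use assms in auto)

lemma sup_norm_subset_le:
  fixes g :: "'a \<Rightarrow> real"
  assumes "bounded (g ` S)" "P \<subseteq> S" "\<forall>x\<in>P. f x = g x"
  shows "sup_norm P f \<le> sup_norm S g"
  using assms sup_norm_upper[OF assms(1)] by (intro sup_norm_le sup_norm_nonneg) auto

lemma lip_seminorm_subset_le:
  fixes g :: "'a::metric_space \<Rightarrow> real"
  assumes "C-lipschitz_on S g" "P \<subseteq> S" "\<forall>x\<in>P. f x = g x"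
  shows "lip_seminorm P f \<le> lip_seminorm S g"
proof (rule lip_seminorm_le)
  have "(lip_seminorm S g)-lipschitz_on P g"
    using lipschitz_on_lip_seminorm[OF assms(1)] assms(2) by (rule lipschitz_on_subset)
  then show "(lip_seminorm S g)-lipschitz_on P f"
    using assms(3) by simp
qed

lemma BL_ballI:
  fixes f :: "'a::metric_space \<Rightarrow> real"
  assumes "\<forall>x. x \<notin> T \<longrightarrow> f x = 0" "L-lipschitz_on T f"
    and "\<forall>x\<in>T. \<bar>f x\<bar> \<le> M" "0 \<le> M" "M + L \<le> 1"
  shows "f \<in> BL_ball T"
proof -
  have "bounded (f ` T)" unfolding bounded_iff using assms(3) by auto
  moreover have "sup_norm T f + lip_seminorm T f \<le> M + L"
    using sup_norm_le[OF assms(3,4)] lip_seminorm_le[OF assms(2)] by linarith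
  ultimately show ?thesis using assms by (auto simp: BL_ball_def BL_def BL_norm_def)
qed

lemma BL_ballD:
  fixes f :: "'a::metric_space \<Rightarrow> real"
  assumes "f \<in> BL_ball T"
  shows "bounded (f ` T)" "(lip_seminorm T f)-lipschitz_on T f" "\<forall>x. x \<notin> T \<longrightarrow> f x = 0"
    and "sup_norm T f + lip_seminorm T f \<le> 1"
  using assms lipschitz_on_lip_seminorm by (auto simp: BL_ball_def BL_def BL_norm_def)

lemma BL_ball_restrict:
  fixes g :: "'a::metric_space \<Rightarrow> real"
  assumes "g \<in> BL_ball S" "P \<subseteq> S"
  shows "(\<lambda>x. if x \<in> P then g x else 0) \<in> BL_ball P"
proof (rule BL_ballI)
  note g = BL_ballD[OF assms(1)]
  show "\<forall>x\<in>P. \<bar>if x \<in> P then g x else 0\<bar> \<le> sup_norm S g"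
    using sup_norm_upper[OF g(1)] assms(2) by auto
  have "(lip_seminorm S g)-lipschitz_on P g"
    using g(2) assms(2) by (rule lipschitz_on_subset)
  then show "(lip_seminorm S g)-lipschitz_on P (\<lambda>x. if x \<in> P then g x else 0)"
    by simp
qed (use BL_ballD[OF assms(1)] sup_norm_nonneg in auto)

lemma ext_ptsI:
  assumes "f \<in> A"
    and "\<And>g h t. g \<in> A \<Longrightarrow> h \<in> A \<Longrightarrow> 0 < t \<Longrightarrow> t < 1 \<Longrightarrow>
      f = (\<lambda>x. t * g x + (1 - t) * h x) \<Longrightarrow> g = h"
  shows "f \<in> ext_pts A"
  using assms unfolding ext_pts_def by blast

lemma ext_ptsD:
  assumes "f \<in> ext_pts A" "g \<in> A" "h \<in> A" "0 < t" "t < 1"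
    and "f = (\<lambda>x. t * g x + (1 - t) * h x)"
  shows "g = h"
  using assms unfolding ext_pts_def by blast

lemma BL_norm_ext_pts:
  fixes f :: "'a::metric_space \<Rightarrow> real"
  assumes "T \<noteq> {}" "f \<in> ext_pts (BL_ball T)"
  shows "BL_norm T f = 1"
proof (rule ccontr)
  have f: "f \<in> BL_ball T" using assms(2) by (simp add: ext_pts_def)
  note f_props = BL_ballD[OF f]
  define e where "e = 1 - BL_norm T f"
  assume "BL_norm T f \<noteq> 1"
  then have "0 < e" using f_props(4) by (simp add: e_def BL_norm_def)
  define shift where "shift c = (\<lambda>x. f x + (if x \<in> T then c else 0))" for c
  have shift_in_ball: "shift c \<in> BL_ball T" if "\<bar>c\<bar> \<le> e" for c
  proof (rule BL_ballI)
    show "\<forall>x\<in>T. \<bar>shift c x\<bar> \<le> sup_norm T f + e"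
      using sup_norm_upper[OF f_props(1)] that by (fastforce simp: shift_def)
    show "(lip_seminorm T f)-lipschitz_on T (shift c)"
      using f_props(2) by (simp add: shift_def lipschitz_on_def dist_real_def)
    show "0 \<le> sup_norm T f + e" using sup_norm_nonneg[OF f_props(1)] \<open>0 < e\<close> by linarith
    show "sup_norm T f + e + lip_seminorm T f \<le> 1" by (simp add: e_def BL_norm_def)
  qed (use f_props(3) in \<open>simp add: shift_def\<close>)
  obtain a where "a \<in> T" using assms(1) by blast
  then have "shift e \<noteq> shift (- e)"
    using \<open>0 < e\<close> by (auto simp: shift_def fun_eq_iff)
  have midpoint: "f = (\<lambda>x. 1/2 * shift e x + (1 - 1/2) * shift (- e) x)"
    by (simp add: shift_def fun_eq_iff algebra_simps)
  have "shift e = shift (- e)"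
    by (rule ext_ptsD[OF assms(2) shift_in_ball shift_in_ball _ _ midpoint])
      (use \<open>0 < e\<close> in simp_all)
  with \<open>shift e \<noteq> shift (- e)\<close> show False by blast
qed

context
  fixes P :: "'a::metric_space set" and f :: "'a \<Rightarrow> real" and C :: real
  assumes P_nonempty: "P \<noteq> {}"
    and f_bounded: "bounded (f ` P)"
    and f_lipschitz: "C-lipschitz_on P f"
begin

lemma ext_op0_term_le_sup_norm:
  assumes "p \<in> P"
  shows "f p - lip_seminorm P f * dist p x \<le> sup_norm P f"
proof -
  have "0 \<le> lip_seminorm P f * dist p x"
    using lip_seminorm_nonneg[OF f_lipschitz] by simp
  then show ?thesis using sup_norm_upper[OF f_bounded assms] by linarith
qed

lemma ext_op0_ge:
  assumes "p \<in> P"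
  shows "f p - lip_seminorm P f * dist p x \<le> ext_op0 P f x"
  unfolding ext_op0_def
  using assms ext_op0_term_le_sup_norm by (intro cSUP_upper bdd_aboveI2) auto

lemma ext_op0_le:
  assumes "\<And>p. p \<in> P \<Longrightarrow> f p - lip_seminorm P f * dist p x \<le> c"
  shows "ext_op0 P f x \<le> c"
  unfolding ext_op0_def using P_nonempty assms by (rule cSUP_least)

lemma ext_op_eq_on:
  assumes "x \<in> P"
  shows "ext_op P f x = f x"
proof -
  have "ext_op0 P f x \<le> f x"
  proof (rule ext_op0_le)
    fix p assume "p \<in> P"
    then show "f p - lip_seminorm P f * dist p x \<le> f x"
      using lip_seminorm_bound[OF f_lipschitz \<open>p \<in> P\<close> assms] by (simp add: abs_le_iff)
  qed
  moreover have "f x \<le> ext_op0 P f x" using ext_op0_ge[OF assms, of x] by simp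
  moreover have "- sup_norm P f \<le> f x" using sup_norm_upper[OF f_bounded assms] by linarith
  ultimately show ?thesis by (simp add: ext_op_def)
qed

lemma abs_ext_op_le: "\<bar>ext_op P f x\<bar> \<le> sup_norm P f"
  using ext_op0_le[OF ext_op0_term_le_sup_norm, of x] sup_norm_nonneg[OF f_bounded]
  by (simp add: ext_op_def abs_le_iff)

lemma lipschitz_on_ext_op: "(lip_seminorm P f)-lipschitz_on UNIV (ext_op P f)"
proof (rule lipschitz_onI)
  let ?L = "lip_seminorm P f"
  have L_nonneg: "0 \<le> ?L" by (rule lip_seminorm_nonneg[OF f_lipschitz])
  have ext_op0_lip: "ext_op0 P f x \<le> ext_op0 P f y + ?L * dist x y" for x y
  proof (rule ext_op0_le)
    fix p assume p: "p \<in> P"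
    have "?L * dist p y \<le> ?L * dist p x + ?L * dist x y"
      using mult_left_mono[OF dist_triangle L_nonneg] by (simp add: distrib_left)
    then show "f p - ?L * dist p x \<le> ext_op0 P f y + ?L * dist x y"
      using ext_op0_ge[OF p, of y] by linarith
  qed
  fix x y :: 'a
  show "dist (ext_op P f x) (ext_op P f y) \<le> ?L * dist x y"
    using ext_op0_lip[of x y] ext_op0_lip[of y x] mult_nonneg_nonneg[OF L_nonneg zero_le_dist]
    by (simp add: ext_op_def dist_real_def dist_commute max_def abs_le_iff)
qed (rule lip_seminorm_nonneg[OF f_lipschitz])

lemma ext_op_least:
  assumes "\<forall>p\<in>P. g p = f p" "(lip_seminorm P f)-lipschitz_on UNIV g" "- sup_norm P f \<le> g x"
  shows "ext_op P f x \<le> g x"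
proof -
  have "ext_op0 P f x \<le> g x"
  proof (rule ext_op0_le)
    fix p assume "p \<in> P"
    then show "f p - lip_seminorm P f * dist p x \<le> g x"
      using lipschitz_onD[OF assms(2), of p x] assms(1) by (auto simp: dist_real_def abs_le_iff)
  qed
  then show ?thesis using assms(3) by (simp add: ext_op_def)
qed

end

lemma ext_op_BL_ball:
  fixes P :: "'a::metric_space set"
  assumes "P \<noteq> {}" "f \<in> BL_ball P"
  shows "ext_op P f \<in> BL_ball (UNIV :: 'a set)"
proof -
  note f = BL_ballD[OF assms(2)]
  show ?thesis
    using abs_ext_op_le[OF assms(1) f(1,2)] lipschitz_on_ext_op[OF assms(1) f(1,2)]
      sup_norm_nonneg[OF f(1)] f(4)
    by (intro BL_ballI) auto
qed

lemma ext_op_le_norm_one_extension: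
  fixes P :: "'a::metric_space set"
  assumes "P \<noteq> {}" "f \<in> BL_ball P" "BL_norm P f = 1"
    and "g \<in> BL_ball (UNIV :: 'a set)" "\<forall>x\<in>P. g x = f x"
  shows "ext_op P f x \<le> g x"
proof -
  note f = BL_ballD[OF assms(2)] and g = BL_ballD[OF assms(4)]
  have "sup_norm P f \<le> sup_norm UNIV g"
    using g(1) by (rule sup_norm_subset_le) (use assms(5) in auto)
  moreover have "lip_seminorm P f \<le> lip_seminorm UNIV g"
    using g(2) by (rule lip_seminorm_subset_le) (use assms(5) in auto)
  ultimately have "sup_norm UNIV g \<le> sup_norm P f" "lip_seminorm UNIV g \<le> lip_seminorm P f"
    using g(4) assms(3) by (auto simp: BL_norm_def)
  then have "(lip_seminorm P f)-lipschitz_on UNIV g" "- sup_norm P f \<le> g x"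
    using lipschitz_on_le[OF g(2)] sup_norm_upper[OF g(1), of x] by auto
  then show ?thesis
    using ext_op_least[OF assms(1) f(1,2) assms(5)] by blast
qed

lemma ext_op_ext_pts:
  fixes P :: "'a::metric_space set"
  assumes "P \<noteq> {}" "f \<in> ext_pts (BL_ball P)"
  shows "ext_op P f \<in> ext_pts (BL_ball (UNIV :: 'a set))"
proof -
  have f: "f \<in> BL_ball P" using assms(2) by (simp add: ext_pts_def)
  note f_props = BL_ballD[OF f]
  show ?thesis
  proof (rule ext_ptsI)
    show "ext_op P f \<in> BL_ball UNIV" using assms(1) f by (rule ext_op_BL_ball)
    fix g h t
    assume g: "g \<in> BL_ball UNIV" and h: "h \<in> BL_ball UNIV" and t: "0 < t" "t < 1"
      and comb: "ext_op P f = (\<lambda>x. t * g x + (1 - t) * h x)"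
    let ?gP = "\<lambda>x. if x \<in> P then g x else 0" and ?hP = "\<lambda>x. if x \<in> P then h x else 0"
    have f_comb: "f = (\<lambda>x. t * ?gP x + (1 - t) * ?hP x)"
      using comb ext_op_eq_on[OF assms(1) f_props(1,2)] f_props(3) by (auto simp: fun_eq_iff)
    then have "?gP = ?hP"
      using ext_ptsD[OF assms(2) BL_ball_restrict[OF g] BL_ball_restrict[OF h] t] by blast
    then have gh_on_P: "g x = h x" if "x \<in> P" for x
      using fun_cong[OF \<open>?gP = ?hP\<close>, of x] that by simp
    have "g x = f x \<and> h x = f x" if "x \<in> P" for x
      using fun_cong[OF f_comb, of x] gh_on_P[OF that] that by (simp add: algebra_simps)
    then have extends: "\<forall>x\<in>P. g x = f x" "\<forall>x\<in>P. h x = f x" by auto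
    have "g x = h x" for x
    proof -
      let ?F = "ext_op P f x"
      have "0 \<le> t * (g x - ?F)" "0 \<le> (1 - t) * (h x - ?F)"
        using ext_op_le_norm_one_extension[OF assms(1) f BL_norm_ext_pts[OF assms] g extends(1)]
          ext_op_le_norm_one_extension[OF assms(1) f BL_norm_ext_pts[OF assms] h extends(2)] t
        by simp_all
      moreover have "t * (g x - ?F) + (1 - t) * (h x - ?F) = 0"
        using fun_cong[OF comb, of x] by (simp add: algebra_simps)
      ultimately have "t * (g x - ?F) = 0" "(1 - t) * (h x - ?F) = 0" by linarith+
      then show ?thesis using t by simp
    qed
    then show "g = h" ..
  qed
qed

theorem theorem4p8:
  fixes P :: "'a::metric_space set"
  assumes "\<exists>a\<in>P. \<exists>b\<in>P. a \<noteq> b"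
    and "f \<in> ext_star P"
  shows "ext_op P f \<in> ext_star (UNIV :: 'a set)"
proof -
  have P: "P \<noteq> {}" using assms(1) by blast
  have f: "f \<in> ext_pts (BL_ball P)" and "\<not> (\<forall>x\<in>P. \<bar>f x\<bar> = 1)"
    using assms(2) by (auto simp: ext_star_def ext_pts_def)
  then obtain x where x: "x \<in> P" "\<bar>f x\<bar> \<noteq> 1" by blast
  have "f \<in> BL_ball P" using f by (simp add: ext_pts_def)
  note f_props = BL_ballD[OF this]
  have "ext_op P f \<in> ext_pts (BL_ball UNIV)" using P f by (rule ext_op_ext_pts)
  moreover have "\<bar>ext_op P f x\<bar> \<noteq> 1"
    using ext_op_eq_on[OF P f_props(1,2) x(1)] x(2) by simp
  ultimately show ?thesis unfolding ext_star_def by blast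
qed

end
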